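(* With $W=\mathrm{des}(\pi)$ and $W^\ast=\mathrm{des}(\pi^\ast)$ as constructed in the context, \[\mathrm{Var}\bigl(\mathbb{E}(W^\ast-W\mid\pi)\bigr)\le\frac{Cn^5}{n^2\bigl(n^2-\sum_a n_a^2\bigr)^2}\] for an absolute constant $C$ (independent of $h$, $n$ and the $n_a$). Here $\mathbb{E}(\cdot\mid\pi)$ averages over the auxiliary randomness $I,J,i^\ast,j^\ast$.
   Context: Let $h\ge 2$, let $n_1,\dots,n_h$ be positive integers, $n=n_1+\dots+n_h\ge 4$, and let $\pi$ be a uniformly distributed permutation of the multiset $\{1^{n_1},\dots,h^{n_h}\}$ (a sequence $(\pi(1),\dots,\pi(n))$ in which each $a$ occurs $n_a$ times, all such sequences equally likely). $\mathrm{des}(\pi)$ is the number of $i\in\{1,\dots,n-1\}$ with $\pi(i)>\pi(i+1)$. Construction of $\pi^\ast$: Let $I$ be uniformly distributed over $\{(1,2),(2,3),\dots,(n-1,n)\}$; let $J=(a,b)$, for $h\ge a>b\ge 1$, with probability $n_an_b/\sum_{c<d}n_cn_d$; $\pi,I,J$ are independent. Write $I=(i,j)$ with $j=i+1$. If $\pi(i)>\pi(j)$, set $\pi^\ast=\pi$. If $\pi(i)\le\pi(j)$ and $J=(a,b)$: choose $i^\ast$ uniformly from $\{k:\pi(k)=a\}$ and $j^\ast$ uniformly from $\{k:\pi(k)=b\}$, independently of each other and of all else. Then: (1) if $\{i,j\}\cap\{i^\ast,j^\ast\}=\emptyset$, or $i=i^\ast,j\ne j^\ast$, or $i\ne i^\ast,j=j^\ast$,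 obtain $\pi^\ast$ from $\pi$ by exchanging the entries at positions $i$ and $i^\ast$ and exchanging the entries at positions $j$ and $j^\ast$; (2) if $i=j^\ast$ and $j=i^\ast$, exchange the entries at positions $i$ and $j$; (3) if $i=j^\ast$, $j\ne i^\ast$, set $\pi^\ast(i)=\pi(i^\ast)$, $\pi^\ast(j)=\pi(i)$, $\pi^\ast(i^\ast)=\pi(j)$, and $\pi^\ast(k)=\pi(k)$ for $k\notin\{i,j,i^\ast\}$; (4) if $i\ne j^\ast$, $j=i^\ast$, set $\pi^\ast(i)=\pi(j)$, $\pi^\ast(j)=\pi(j^\ast)$, $\pi^\ast(j^\ast)=\pi(i)$, and $\pi^\ast(k)=\pi(k)$ for $k\notin\{i,j,j^\ast\}$. *)

theory Defs
  imports "HOL-Probability.Probability"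
begin

text \<open>Sequences are lists with 0-based positions; letters are 1..h; ns a = n_a.\<close>

definition des :: "nat list \<Rightarrow> nat" where
  "des xs = card {i. Suc i < length xs \<and> xs ! i > xs ! Suc i}"

definition multiset_perms :: "nat \<Rightarrow> (nat \<Rightarrow> nat) \<Rightarrow> nat list set" where
  "multiset_perms h ns = {xs. set xs \<subseteq> {1..h} \<and> (\<forall>a\<in>{1..h}. count (mset xs) a = ns a)}"

definition positions :: "nat list \<Rightarrow> nat \<Rightarrow> nat set" where
  "positions xs a = {k. k < length xs \<and> xs ! k = a}"

definition swap_pos :: "nat list \<Rightarrow> nat \<Rightarrow> nat \<Rightarrow> nat list" where
  "swap_pos xs p q = xs[p := xs ! q, q := xs ! p]"

text \<open>The permutation pi* for I = (i, i+1), and chosen positions istar, jstar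
  (istar uniform among positions of letter a, jstar among those of b, J = (a,b)).\<close>
definition pi_star :: "nat list \<Rightarrow> nat \<Rightarrow> nat \<Rightarrow> nat \<Rightarrow> nat list" where
  "pi_star xs i istar jstar =
     (let j = Suc i in
      if xs ! i > xs ! j then xs
      else if ({i, j} \<inter> {istar, jstar} = {}) \<or> (i = istar \<and> j \<noteq> jstar) \<or> (i \<noteq> istar \<and> j = jstar)
        then swap_pos (swap_pos xs i istar) j jstar
      else if i = jstar \<and> j = istar then swap_pos xs i j
      else if i = jstar \<and> j \<noteq> istar then xs[i := xs ! istar, j := xs ! i, istar := xs ! j]
      else if i \<noteq> jstar \<and> j = istar then xs[i := xs ! j, j := xs ! jstar, jstar := xs ! i]
      else xs)"

definition Zconst :: "nat \<Rightarrow> (nat \<Rightarrow> nat) \<Rightarrow> real" where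
  "Zconst h ns = (\<Sum>(a, b) \<in> {(a, b). a \<in> {1..h} \<and> b \<in> {1..h} \<and> b < a}. real (ns a) * real (ns b))"

definition cond_exp_diff :: "nat \<Rightarrow> (nat \<Rightarrow> nat) \<Rightarrow> nat list \<Rightarrow> real" where
  "cond_exp_diff h ns xs =
     (\<Sum>i\<in>{0..<length xs - 1}. (1 / real (length xs - 1)) *
       (\<Sum>(a, b) \<in> {(a, b). a \<in> {1..h} \<and> b \<in> {1..h} \<and> b < a}.
          (real (ns a) * real (ns b) / Zconst h ns) *
          (\<Sum>istar\<in>positions xs a. \<Sum>jstar\<in>positions xs b.
             (1 / (real (ns a) * real (ns b))) *
             (real (des (pi_star xs i istar jstar)) - real (des xs)))))"

end

theory Submission
  imports Defs "HOL-Combinatorics.Multiset_Permutations"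
begin

text \<open>Up to the factor \<open>1 / ((n - 1) Z)\<close>, where \<open>Z = \<Sum>\<^sub>c\<^sub><\<^sub>d n\<^sub>c n\<^sub>d\<close>, the
  conditional expectation \<open>E(W\<^sup>* - W | \<pi>)\<close> is the sum, over all slots \<open>i\<close> and all pairs of
  positions \<open>(s, t)\<close> with \<open>\<pi>(s) > \<pi>(t)\<close>, of the change in descents caused by the move; each
  change is at most 8 in absolute value since the move only alters the window \<open>{i, i+1, s, t}\<close>.
  Transposing two entries \<open>p, q\<close> of \<open>\<pi>\<close> and relabelling \<open>(s, t)\<close> by the same transposition
  leaves every term unchanged unless its window is adjacent to \<open>p\<close> or \<open>q\<close>, so the conditional
  expectation is \<open>384 n\<^sup>2 / ((n - 1) Z)\<close>-Lipschitz under transpositions. An Efron--Stein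
  inequality for uniform multiset permutations, proved by induction on the length by conditioning
  on the first letter, bounds the variance by \<open>n\<close> times the square of this constant.
  Finally \<open>n\<^sup>2 - \<Sum>\<^sub>a n\<^sub>a\<^sup>2 = 2 Z\<close>.\<close>

section \<open>Finite sums and averages\<close>

definition avg :: "'a set \<Rightarrow> ('a \<Rightarrow> real) \<Rightarrow> real" where
  "avg A g = (\<Sum>x\<in>A. g x) / card A"

definition sum_sq_dev :: "'a set \<Rightarrow> ('a \<Rightarrow> real) \<Rightarrow> real" where
  "sum_sq_dev A g = (\<Sum>x\<in>A. (g x - avg A g)\<^sup>2)"

lemma sum_sq_dev_shift:
  assumes "finite A"
  shows "(\<Sum>x\<in>A. (g x - c)\<^sup>2) = sum_sq_dev A g + card A * (avg A g - c)\<^sup>2"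
proof (cases "A = {}")
  case False
  let ?m = "avg A g"
  have sum_eq: "(\<Sum>x\<in>A. g x) = card A * ?m"
    using assms False by (simp add: avg_def)
  have "(\<Sum>x\<in>A. (g x - c)\<^sup>2) = (\<Sum>x\<in>A. (g x - ?m)\<^sup>2 + 2 * (?m - c) * g x - 2 * (?m - c) * ?m + (?m - c)\<^sup>2)"
    by (rule sum.cong) (auto simp: power2_eq_square algebra_simps)
  also have "\<dots> = sum_sq_dev A g + 2 * (?m - c) * (\<Sum>x\<in>A. g x) - card A * (2 * (?m - c) * ?m) + card A * (?m - c)\<^sup>2"
    by (simp add: sum.distrib sum_subtractf sum_sq_dev_def sum_distrib_left)
  finally show ?thesis by (simp add: sum_eq algebra_simps)
qed (simp add: sum_sq_dev_def)

lemma sum_sq_dev_le: "finite A \<Longrightarrow> sum_sq_dev A g \<le> (\<Sum>x\<in>A. (g x - c)\<^sup>2)"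
  by (simp add: sum_sq_dev_shift)

lemma variance_pmf_of_set:
  assumes "finite S" "S \<noteq> {}"
  shows "measure_pmf.variance (pmf_of_set S) f = sum_sq_dev S f / card S"
  using assms by (simp add: integral_pmf_of_set sum_sq_dev_def avg_def)

lemma avg_Sigma_fst:
  assumes "finite A" and "\<And>a. a \<in> A \<Longrightarrow> finite (B a) \<and> card (B a) = k" and "k > 0"
  shows "avg (Sigma A B) (\<lambda>z. g (fst z)) = avg A g"
proof -
  have "(\<Sum>z\<in>Sigma A B. g (fst z)) = (\<Sum>a\<in>A. \<Sum>b\<in>B a. g a)"
    by (subst sum.Sigma) (use assms in \<open>auto simp: split_def\<close>)
  also have "\<dots> = k * (\<Sum>a\<in>A. g a)"
    using assms by (simp add: sum_distrib_left)
  finally have "(\<Sum>z\<in>Sigma A B. g (fst z)) = k * (\<Sum>a\<in>A. g a)" .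
  moreover have "card (Sigma A B) = k * card A"
    using assms by simp
  ultimately show ?thesis
    using \<open>k > 0\<close> by (simp add: avg_def)
qed

lemma avg_diff_le_bij:
  assumes bij: "bij_betw \<phi> P P'" and "finite P" "P \<noteq> {}"
    and close: "\<And>z. z \<in> P \<Longrightarrow> \<bar>g' (\<phi> z) - g z\<bar> \<le> L"
  shows "\<bar>avg P' g' - avg P g\<bar> \<le> L"
proof -
  have "card P' = card P" and "(\<Sum>z\<in>P'. g' z) = (\<Sum>z\<in>P. g' (\<phi> z))"
    using bij by (simp_all add: bij_betw_same_card sum.reindex_bij_betw)
  then have "avg P' g' - avg P g = (\<Sum>z\<in>P. g' (\<phi> z) - g z) / card P"
    by (simp add: avg_def sum_subtractf diff_divide_distrib)
  also have "\<bar>\<dots>\<bar> \<le> (\<Sum>z\<in>P. L) / card P"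
    unfolding abs_divide abs_of_nat
    by (intro divide_right_mono order.trans[OF sum_abs] sum_mono close) simp_all
  finally show ?thesis
    using assms by simp
qed

lemma sum_diff_le_card_neq:
  fixes F G :: "'a \<Rightarrow> real"
  assumes "finite A" and bound: "\<And>z. z \<in> A \<Longrightarrow> \<bar>F z - G z\<bar> \<le> c"
  shows "\<bar>sum F A - sum G A\<bar> \<le> c * card {z\<in>A. F z \<noteq> G z}"
proof -
  have "sum F A - sum G A = (\<Sum>z\<in>{z\<in>A. F z \<noteq> G z}. F z - G z)"
    using \<open>finite A\<close> by (auto simp: sum_subtractf[symmetric] sum.inter_filter intro: sum.cong)
  also have "\<bar>\<dots>\<bar> \<le> (\<Sum>z\<in>{z\<in>A. F z \<noteq> G z}. c)"
    by (rule order.trans[OF sum_abs sum_mono]) (simp add: bound)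
  finally show ?thesis
    by (simp add: mult.commute)
qed

lemma square_sum_atLeastAtMost:
  fixes x :: "nat \<Rightarrow> 'a::comm_ring_1"
  shows "(\<Sum>a=1..h. x a)\<^sup>2 = (\<Sum>a=1..h. (x a)\<^sup>2) + 2 * (\<Sum>a=1..h. \<Sum>b\<in>{1..<a}. x a * x b)"
proof (induction h)
  case (Suc h)
  have squares: "(\<Sum>a=1..Suc h. (x a)\<^sup>2) = (\<Sum>a=1..h. (x a)\<^sup>2) + (x (Suc h))\<^sup>2"
    by simp
  have pairs: "(\<Sum>a=1..Suc h. \<Sum>b\<in>{1..<a}. x a * x b)
      = (\<Sum>a=1..h. \<Sum>b\<in>{1..<a}. x a * x b) + x (Suc h) * (\<Sum>a=1..h. x a)"
    by (simp add: atLeastLessThanSuc_atLeastAtMost sum_distrib_left)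
  have sum: "(\<Sum>a=1..Suc h. x a) = (\<Sum>a=1..h. x a) + x (Suc h)"
    by simp
  show ?case
    unfolding squares pairs sum power2_sum Suc.IH by (simp add: algebra_simps)
qed simp

section \<open>Position swaps\<close>

lemma length_swap_pos [simp]: "length (swap_pos xs p q) = length xs"
  by (simp add: swap_pos_def)

lemma nth_swap_pos:
  "p < length xs \<Longrightarrow> q < length xs \<Longrightarrow> k < length xs \<Longrightarrow> swap_pos xs p q ! k = xs ! Transposition.transpose p q k"
  by (auto simp: swap_pos_def Transposition.transpose_def nth_list_update)

lemma mset_swap_pos [simp]: "p < length xs \<Longrightarrow> q < length xs \<Longrightarrow> mset (swap_pos xs p q) = mset xs"
  by (simp add: swap_pos_def mset_swap)

lemma transpose_less: "p < n \<Longrightarrow> q < n \<Longrightarrow> k < n \<Longrightarrow> Transposition.transpose p q k < n"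
  by (simp add: Transposition.transpose_def)

lemma swap_pos_swap_pos:
  assumes "p < length xs" "q < length xs" "a < length xs" "b < length xs"
  shows "swap_pos (swap_pos xs a b) p q
       = swap_pos (swap_pos xs p q) (Transposition.transpose p q a) (Transposition.transpose p q b)"
  by (rule nth_equalityI)
    (use assms in \<open>auto simp: nth_swap_pos transpose_less Transposition.transpose_def\<close>)

lemma swap_pos_list_update:
  assumes "p < length xs" "q < length xs" "a < length xs"
  shows "swap_pos (xs[a := v]) p q = (swap_pos xs p q)[Transposition.transpose p q a := v]"
  by (rule nth_equalityI)
    (use assms in \<open>auto simp: nth_swap_pos transpose_less nth_list_update Transposition.transpose_def\<close>)

lemma swap_pos_Cons_Suc: "swap_pos (c # ys) (Suc p) (Suc q) = c # swap_pos ys p q"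
  by (simp add: swap_pos_def)

lemma swap_pos_Cons_0: "q < length ys \<Longrightarrow> swap_pos (c # ys) 0 (Suc q) = ys ! q # ys[q := c]"
  by (simp add: swap_pos_def)

section \<open>An Efron--Stein inequality for multiset permutations\<close>

lemma card_positions: "card (positions xs a) = count (mset xs) a"
  unfolding positions_def count_mset count_list_eq_length_filter length_filter_conv_card
  by (rule arg_cong[where f = card]) auto

lemma finite_positions [simp]: "finite (positions xs a)"
  by (simp add: positions_def)

lemma mset_list_update_remove:
  assumes "mset ys = M - {#c#}" "c \<in># M" "q < length ys" "ys ! q = c'" "c \<noteq> c'"
  shows "mset (ys[q := c]) = M - {#c'#}"
proof -
  have "c' \<in># M"
    using assms by (metis in_diffD nth_mem set_mset_mset)
  then show ?thesis
    using assms by (auto simp: mset_update multiset_eq_iff)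
qed

lemma bij_betw_Sigma_positions_list_update:
  assumes c: "c \<in># M" and c': "c' \<in># M" and "c \<noteq> c'"
  shows "bij_betw (\<lambda>(ys, q). (ys[q := c], q))
           (SIGMA ys:permutations_of_multiset (M - {#c#}). positions ys c')
           (SIGMA ys:permutations_of_multiset (M - {#c'#}). positions ys c)"
proof (rule bij_betw_byWitness[where f' = "\<lambda>(ys, q). (ys[q := c'], q)"])
  show "(\<lambda>(ys, q). (ys[q := c], q)) ` (SIGMA ys:permutations_of_multiset (M - {#c#}). positions ys c')
      \<subseteq> (SIGMA ys:permutations_of_multiset (M - {#c'#}). positions ys c)"
    using mset_list_update_remove[OF _ c _ _ \<open>c \<noteq> c'\<close>]
    by (auto simp: positions_def permutations_of_multiset_def)
  show "(\<lambda>(ys, q). (ys[q := c'], q)) ` (SIGMA ys:permutations_of_multiset (M - {#c'#}). positions ys c)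
      \<subseteq> (SIGMA ys:permutations_of_multiset (M - {#c#}). positions ys c')"
    using mset_list_update_remove[OF _ c' _ _ \<open>c \<noteq> c'\<close>[symmetric]]
    by (auto simp: positions_def permutations_of_multiset_def)
qed (auto simp: positions_def)

text \<open>Coupling: exchanging the first letter \<open>c\<close> with a uniformly chosen occurrence of \<open>c'\<close>
  is a single transposition, and it carries the uniform distribution on the permutations starting
  with \<open>c\<close> to the uniform distribution on those starting with \<open>c'\<close>.\<close>
lemma avg_perms_Cons_diff_le:
  fixes f :: "nat list \<Rightarrow> real"
  assumes c: "c \<in># M" and c': "c' \<in># M" and "c \<noteq> c'"
    and lip: "\<And>xs q. mset xs = M \<Longrightarrow> q < size M \<Longrightarrow> \<bar>f (swap_pos xs 0 q) - f xs\<bar> \<le> L"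
  shows "\<bar>avg (permutations_of_multiset (M - {#c'#})) (\<lambda>ys. f (c' # ys))
          - avg (permutations_of_multiset (M - {#c#})) (\<lambda>ys. f (c # ys))\<bar> \<le> L"
proof -
  define P where "P = Sigma (permutations_of_multiset (M - {#c#})) (\<lambda>ys. positions ys c')"
  define P' where "P' = Sigma (permutations_of_multiset (M - {#c'#})) (\<lambda>ys. positions ys c)"
  have avg_P: "avg P (\<lambda>z. f (c # fst z))
      = avg (permutations_of_multiset (M - {#c#})) (\<lambda>ys. f (c # ys))"
    unfolding P_def using c' \<open>c \<noteq> c'\<close>
    by (intro avg_Sigma_fst[where k = "count M c'"])
      (auto simp: card_positions dest: permutations_of_multisetD)
  have avg_P': "avg P' (\<lambda>z. f (c' # fst z))
      = avg (permutations_of_multiset (M - {#c'#})) (\<lambda>ys. f (c' # ys))"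
    unfolding P'_def using c \<open>c \<noteq> c'\<close>
    by (intro avg_Sigma_fst[where k = "count M c"])
      (auto simp: card_positions dest: permutations_of_multisetD)
  have bij: "bij_betw (\<lambda>(ys, q). (ys[q := c], q)) P P'"
    unfolding P_def P'_def by (rule bij_betw_Sigma_positions_list_update[OF c c' \<open>c \<noteq> c'\<close>])
  obtain ys where ys: "mset ys = M - {#c#}"
    using ex_mset by blast
  moreover have "c' \<in># M - {#c#}"
    using c' \<open>c \<noteq> c'\<close> by (simp add: in_diff_count)
  ultimately have "c' \<in> set ys"
    by (metis set_mset_mset)
  then have "P \<noteq> {}"
    using ys by (auto simp: P_def positions_def in_set_conv_nth intro: permutations_of_multisetI)
  have close: "\<bar>f (c' # ys[q := c]) - f (c # ys)\<bar> \<le> L" if "(ys, q) \<in> P" for ys q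
  proof -
    have ys: "mset ys = M - {#c#}" "q < length ys" "ys ! q = c'"
      using that by (auto simp: P_def positions_def permutations_of_multiset_def)
    then have M: "mset (c # ys) = M"
      using c by simp
    have "Suc q < size M"
      using ys(2) unfolding M[symmetric] by simp
    then show ?thesis
      using lip[OF M \<open>Suc q < size M\<close>] swap_pos_Cons_0[OF ys(2), of c] ys(3) by simp
  qed
  have "finite P"
    by (simp add: P_def)
  show ?thesis
    unfolding avg_P[symmetric] avg_P'[symmetric]
    by (rule avg_diff_le_bij[OF bij \<open>finite P\<close> \<open>P \<noteq> {}\<close>]) (auto intro: close)
qed

lemma sum_permutations_of_multiset_Cons:
  assumes "M \<noteq> {#}"
  shows "(\<Sum>xs\<in>permutations_of_multiset M. g xs)
       = (\<Sum>c\<in>set_mset M. \<Sum>ys\<in>permutations_of_multiset (M - {#c#}). g (c # ys))"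
proof -
  have "(\<Sum>xs\<in>permutations_of_multiset M. g xs)
      = (\<Sum>c\<in>set_mset M. \<Sum>xs\<in>(#) c ` permutations_of_multiset (M - {#c#}). g xs)"
    unfolding permutations_of_multiset_nonempty[OF assms] by (rule sum.UNION_disjoint) auto
  then show ?thesis
    by (simp add: sum.reindex)
qed

text \<open>Conditioning on the first letter, the sums of squares within the classes are bounded by
  induction and the spread of the class means by the coupling.\<close>
lemma sum_sq_dev_permutations_of_multiset_le:
  fixes f :: "nat list \<Rightarrow> real" and L :: real
  assumes "\<And>xs p q. mset xs = M \<Longrightarrow> p < size M \<Longrightarrow> q < size M \<Longrightarrow>
             \<bar>f (swap_pos xs p q) - f xs\<bar> \<le> L"
  shows "sum_sq_dev (permutations_of_multiset M) f
           \<le> real (card (permutations_of_multiset M)) * size M * L\<^sup>2"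
  using assms
proof (induction "size M" arbitrary: M f)
  case 0
  then show ?case
    by (simp add: sum_sq_dev_def avg_def)
next
  case (Suc n)
  let ?S = "\<lambda>c. permutations_of_multiset (M - {#c#})"
  define m where "m c = avg (?S c) (\<lambda>ys. f (c # ys))" for c
  have "M \<noteq> {#}"
    using Suc.hyps(2) by auto
  then obtain c0 where c0: "c0 \<in># M"
    by blast
  have within: "sum_sq_dev (?S c) (\<lambda>ys. f (c # ys)) \<le> real (card (?S c)) * n * L\<^sup>2"
    if c: "c \<in># M" for c
  proof -
    have size: "size (M - {#c#}) = n"
      using Suc.hyps(2) c by (simp add: size_Diff_submset)
    have "\<bar>f (c # swap_pos xs p q) - f (c # xs)\<bar> \<le> L"
      if "mset xs = M - {#c#}" "p < size (M - {#c#})" "q < size (M - {#c#})" for xs p q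
      using Suc.prems[of "c # xs" "Suc p" "Suc q"] that c Suc.hyps(2) size
      by (simp add: swap_pos_Cons_Suc)
    then show ?thesis
      using Suc.hyps(1)[OF size[symmetric], of "\<lambda>ys. f (c # ys)"] by (simp add: size)
  qed
  have between: "(m c - m c0)\<^sup>2 \<le> L\<^sup>2" if c: "c \<in># M" for c
  proof (cases "c = c0")
    case False
    have "\<bar>m c - m c0\<bar> \<le> L"
      unfolding m_def by (rule avg_perms_Cons_diff_le[OF c0 c]) (use False Suc.prems in auto)
    then show ?thesis
      by (metis abs_ge_zero order.trans power2_abs power_mono)
  qed simp
  have "sum_sq_dev (permutations_of_multiset M) f \<le> (\<Sum>xs\<in>permutations_of_multiset M. (f xs - m c0)\<^sup>2)"
    by (rule sum_sq_dev_le) simp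
  also have "\<dots> = (\<Sum>c\<in>set_mset M. sum_sq_dev (?S c) (\<lambda>ys. f (c # ys)) + card (?S c) * (m c - m c0)\<^sup>2)"
    unfolding sum_permutations_of_multiset_Cons[OF \<open>M \<noteq> {#}\<close>] m_def
    by (simp add: sum_sq_dev_shift)
  also have "\<dots> \<le> (\<Sum>c\<in>set_mset M. card (?S c) * n * L\<^sup>2 + card (?S c) * L\<^sup>2)"
    using within between by (intro sum_mono add_mono mult_left_mono) auto
  also have "\<dots> = (\<Sum>c\<in>set_mset M. real (card (?S c))) * Suc n * L\<^sup>2"
    by (simp add: sum_distrib_left sum_distrib_right sum.distrib algebra_simps)
  also have "(\<Sum>c\<in>set_mset M. real (card (?S c))) = card (permutations_of_multiset M)"
    using sum_permutations_of_multiset_Cons[OF \<open>M \<noteq> {#}\<close>, of "\<lambda>_. 1::real"] by simp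
  finally show ?case
    using Suc.hyps(2) by simp
qed

section \<open>Descents under local changes\<close>

lemma des_eq_sum: "real (des xs) = (\<Sum>k<length xs - 1. of_bool (xs ! Suc k < xs ! k))"
proof -
  have "{k. Suc k < length xs \<and> xs ! k > xs ! Suc k} = {..<length xs - 1} \<inter> {k. xs ! Suc k < xs ! k}"
    by auto
  then show ?thesis
    by (simp add: des_def)
qed

lemma des_diff_le:
  assumes len: "length r = length x" and agree: "\<And>k. k < length x \<Longrightarrow> k \<notin> P \<Longrightarrow> r ! k = x ! k"
    and "finite P"
  shows "\<bar>real (des r) - real (des x)\<bar> \<le> 2 * real (card P)"
proof -
  let ?Q = "P \<union> (\<lambda>k. k - 1) ` P"
  have "\<bar>real (des r) - real (des x)\<bar>
      \<le> (\<Sum>k<length x - 1. \<bar>of_bool (r ! Suc k < r ! k) - of_bool (x ! Suc k < x ! k)\<bar>)"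
    unfolding des_eq_sum len sum_subtractf[symmetric] by (rule sum_abs)
  also have "\<dots> \<le> (\<Sum>k<length x - 1. of_bool (k \<in> ?Q))"
  proof (rule sum_mono)
    fix k assume k: "k \<in> {..<length x - 1}"
    show "\<bar>of_bool (r ! Suc k < r ! k) - of_bool (x ! Suc k < x ! k)\<bar> \<le> (of_bool (k \<in> ?Q) :: real)"
    proof (cases "k \<in> ?Q")
      case False
      then have "k \<notin> P" "Suc k \<notin> P"
        by (auto intro: image_eqI[where x = "Suc k"])
      then show ?thesis
        using k agree[of k] agree[of "Suc k"] by simp
    qed simp
  qed
  also have "\<dots> \<le> card ?Q"
    using \<open>finite P\<close> by (subst sum_of_bool_eq) (auto intro: card_mono)
  also have "\<dots> \<le> 2 * real (card P)"
    using card_Un_le[of P "(\<lambda>k. k - 1) ` P"] card_image_le[OF \<open>finite P\<close>, of "\<lambda>k. k - 1"]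
    by linarith
  finally show ?thesis .
qed

definition swap_nbhd :: "nat \<Rightarrow> nat \<Rightarrow> nat set" where
  "swap_nbhd p q = {p - 1, p, Suc p, q - 1, q, Suc q}"

lemma finite_swap_nbhd [simp]: "finite (swap_nbhd p q)"
  by (simp add: swap_nbhd_def)

lemma card_swap_nbhd_le: "card (swap_nbhd p q) \<le> 6"
  unfolding swap_nbhd_def using card_length[of "[p - 1, p, Suc p, q - 1, q, Suc q]"] by simp

lemma des_diff_swap_pos:
  assumes len: "length r = length x" and agree: "\<And>k. k < length x \<Longrightarrow> k \<notin> P \<Longrightarrow> r ! k = x ! k"
    and p: "p < length x" and q: "q < length x" and far: "P \<inter> swap_nbhd p q = {}"
  shows "real (des (swap_pos r p q)) - real (des (swap_pos x p q)) = real (des r) - real (des x)"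
proof -
  let ?D = "\<lambda>(y::nat list) k. of_bool (y ! Suc k < y ! k) :: real"
  have "?D (swap_pos r p q) k - ?D (swap_pos x p q) k = ?D r k - ?D x k" if k: "k \<in> {..<length x - 1}" for k
  proof (cases "k \<in> {p, q} \<or> Suc k \<in> {p, q}")
    case False
    then show ?thesis
      using k len p q by (simp add: nth_swap_pos)
  next
    case True
    then have "k \<notin> P" "Suc k \<notin> P"
        "Transposition.transpose p q k \<notin> P" "Transposition.transpose p q (Suc k) \<notin> P"
      using far by (auto simp: swap_nbhd_def Transposition.transpose_def)
    then show ?thesis
      using k len p q agree transpose_less[OF p q] by (simp add: nth_swap_pos)
  qed
  then have "(\<Sum>k<length x - 1. ?D (swap_pos r p q) k - ?D (swap_pos x p q) k)
      = (\<Sum>k<length x - 1. ?D r k - ?D x k)"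
    by (rule sum.cong[OF refl])
  then show ?thesis
    using len by (simp only: des_eq_sum length_swap_pos sum_subtractf)
qed

lemma length_pi_star [simp]: "length (pi_star xs i s t) = length xs"
  by (simp add: pi_star_def Let_def swap_pos_def)

lemma nth_pi_star_other: "k \<notin> {i, Suc i, s, t} \<Longrightarrow> pi_star xs i s t ! k = xs ! k"
  by (auto simp: pi_star_def Let_def swap_pos_def nth_list_update)

lemma des_pi_star_diff_le: "\<bar>real (des (pi_star xs i s t)) - real (des xs)\<bar> \<le> 8"
proof -
  have "\<bar>real (des (pi_star xs i s t)) - real (des xs)\<bar> \<le> 2 * real (card {i, Suc i, s, t})"
    by (rule des_diff_le) (auto simp: nth_pi_star_other)
  also have "card {i, Suc i, s, t} \<le> 4"
    using card_length[of "[i, Suc i, s, t]"] by simp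
  finally show ?thesis
    by simp
qed

lemma pi_star_swap_pos:
  assumes p: "p < length xs" and q: "q < length xs" and i: "Suc i < length xs"
    and s: "s < length xs" and t: "t < length xs" and disj: "{i, Suc i} \<inter> {p, q} = {}"
  shows "pi_star (swap_pos xs p q) i (Transposition.transpose p q s) (Transposition.transpose p q t)
       = swap_pos (pi_star xs i s t) p q"
proof -
  let ?\<tau> = "Transposition.transpose p q"
  have fix_i: "?\<tau> i = i" "?\<tau> (Suc i) = Suc i"
    using disj by auto
  have nth: "swap_pos xs p q ! i = xs ! i" "swap_pos xs p q ! Suc i = xs ! Suc i"
      "swap_pos xs p q ! ?\<tau> s = xs ! s" "swap_pos xs p q ! ?\<tau> t = xs ! t"
    using p q i s t fix_i by (simp_all add: nth_swap_pos transpose_less)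
  have eq_i: "(?\<tau> s = i) = (s = i)" "(?\<tau> s = Suc i) = (s = Suc i)"
      "(?\<tau> t = i) = (t = i)" "(?\<tau> t = Suc i) = (t = Suc i)"
      "(i = ?\<tau> s) = (i = s)" "(Suc i = ?\<tau> s) = (Suc i = s)"
      "(i = ?\<tau> t) = (i = t)" "(Suc i = ?\<tau> t) = (Suc i = t)"
    using fix_i by (metis transpose_involutory)+
  show ?thesis
    unfolding pi_star_def Let_def
    using p q i s t disj nth eq_i fix_i
    by (auto simp: swap_pos_swap_pos[of p _ q] swap_pos_list_update[of p _ q] transpose_less)
qed

lemma des_change_swap_pos:
  assumes p: "p < length xs" and q: "q < length xs" and i: "Suc i < length xs"
    and s: "s < length xs" and t: "t < length xs" and far: "{i, Suc i, s, t} \<inter> swap_nbhd p q = {}"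
  shows "real (des (pi_star (swap_pos xs p q) i
                      (Transposition.transpose p q s) (Transposition.transpose p q t)))
           - real (des (swap_pos xs p q))
       = real (des (pi_star xs i s t)) - real (des xs)"
proof -
  have "{i, Suc i} \<inter> {p, q} = {}"
    using far by (auto simp: swap_nbhd_def)
  show ?thesis
    unfolding pi_star_swap_pos[OF p q i s t \<open>{i, Suc i} \<inter> {p, q} = {}\<close>]
    by (rule des_diff_swap_pos[where P = "{i, Suc i, s, t}"]) (use p q far in \<open>auto simp: nth_pi_star_other\<close>)
qed

section \<open>The conditional expectation of the exchange\<close>

definition gt_pairs :: "nat list \<Rightarrow> (nat \<times> nat) set" where
  "gt_pairs xs = {(s, t). s < length xs \<and> t < length xs \<and> xs ! t < xs ! s}"

lemma gt_pairs_subset: "gt_pairs xs \<subseteq> {..<length xs} \<times> {..<length xs}"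
  by (auto simp: gt_pairs_def)

lemma finite_gt_pairs [simp]: "finite (gt_pairs xs)"
  using finite_subset[OF gt_pairs_subset] by blast

lemma bij_betw_gt_pairs_swap_pos:
  assumes "p < length xs" "q < length xs"
  shows "bij_betw (map_prod (Transposition.transpose p q) (Transposition.transpose p q))
           (gt_pairs xs) (gt_pairs (swap_pos xs p q))"
  by (rule bij_betw_byWitness[where
        f' = "map_prod (Transposition.transpose p q) (Transposition.transpose p q)"])
    (use assms in \<open>auto simp: gt_pairs_def nth_swap_pos transpose_less\<close>)

definition total_des_change :: "nat list \<Rightarrow> real" where
  "total_des_change xs =
     (\<Sum>(i, s, t) \<in> {..<length xs - 1} \<times> gt_pairs xs. real (des (pi_star xs i s t)) - real (des xs))"

lemma total_des_change_swap_pos: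
  assumes "p < length xs" "q < length xs"
  shows "total_des_change (swap_pos xs p q) =
    (\<Sum>(i, s, t) \<in> {..<length xs - 1} \<times> gt_pairs xs.
       real (des (pi_star (swap_pos xs p q) i (Transposition.transpose p q s) (Transposition.transpose p q t)))
       - real (des (swap_pos xs p q)))"
proof -
  let ?\<tau> = "Transposition.transpose p q"
  have "bij_betw (map_prod id (map_prod ?\<tau> ?\<tau>))
      ({..<length xs - 1} \<times> gt_pairs xs) ({..<length xs - 1} \<times> gt_pairs (swap_pos xs p q))"
    by (intro bij_betw_map_prod bij_betw_id bij_betw_gt_pairs_swap_pos assms)
  then show ?thesis
    by (simp add: total_des_change_def sum.reindex_bij_betw[symmetric] case_prod_beta)
qed

definition swap_affected :: "nat \<Rightarrow> nat \<Rightarrow> nat \<Rightarrow> (nat \<times> nat \<times> nat) set" where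
  "swap_affected n p q =
     (swap_nbhd p q \<union> (\<lambda>k. k - 1) ` swap_nbhd p q) \<times> ({..<n} \<times> {..<n})
     \<union> {..<n} \<times> (swap_nbhd p q \<times> {..<n} \<union> {..<n} \<times> swap_nbhd p q)"

lemma finite_swap_affected [simp]: "finite (swap_affected n p q)"
  by (simp add: swap_affected_def)

lemma mem_swap_affected:
  "i < n \<Longrightarrow> s < n \<Longrightarrow> t < n \<Longrightarrow> {i, Suc i, s, t} \<inter> swap_nbhd p q \<noteq> {} \<Longrightarrow>
    (i, s, t) \<in> swap_affected n p q"
  by (force simp: swap_affected_def)

lemma card_swap_affected_le: "card (swap_affected n p q) \<le> 24 * n\<^sup>2"
proof -
  let ?N = "swap_nbhd p q"
  let ?I = "?N \<union> (\<lambda>k. k - 1) ` ?N"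
  let ?ST = "?N \<times> {..<n} \<union> {..<n} \<times> ?N"
  have N: "card ?N * n \<le> 6 * n" "n * card ?N \<le> 6 * n"
    using card_swap_nbhd_le by simp_all
  have I: "card ?I \<le> 12"
    using card_Un_le[of ?N "(\<lambda>k. k - 1) ` ?N"] card_image_le[of ?N "\<lambda>k. k - 1"] card_swap_nbhd_le[of p q]
    by simp
  have ST: "card ?ST \<le> 12 * n"
    using card_Un_le[of "?N \<times> {..<n}" "{..<n} \<times> ?N"] N
    unfolding card_cartesian_product card_lessThan by linarith
  have "card (swap_affected n p q) \<le> card ?I * n\<^sup>2 + n * card ?ST"
    using card_Un_le[of "?I \<times> ({..<n} \<times> {..<n})" "{..<n} \<times> ?ST"]
    unfolding swap_affected_def card_cartesian_product card_lessThan power2_eq_square by simp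
  also have "\<dots> \<le> 12 * n\<^sup>2 + n * (12 * n)"
    by (intro add_mono mult_right_mono[OF I] mult_left_mono[OF ST]) simp_all
  finally show ?thesis
    by (simp add: power2_eq_square)
qed

text \<open>After relabelling the chosen positions by the transposition, only the terms whose window
  \<open>{i, i+1, s, t}\<close> meets \<open>swap_nbhd p q\<close> can change, each by at most 16.\<close>
lemma total_des_change_swap_pos_le:
  assumes p: "p < length xs" and q: "q < length xs"
  shows "\<bar>total_des_change (swap_pos xs p q) - total_des_change xs\<bar> \<le> 384 * (length xs)\<^sup>2"
proof -
  define n where "n = length xs"
  let ?\<tau> = "Transposition.transpose p q"
  let ?xs' = "swap_pos xs p q"
  define A where "A = {..<n - 1} \<times> gt_pairs xs"
  define F where "F = (\<lambda>(i, s, t). real (des (pi_star ?xs' i (?\<tau> s) (?\<tau> t))) - real (des ?xs'))"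
  define G where "G = (\<lambda>(i, s, t). real (des (pi_star xs i s t)) - real (des xs))"
  have "{z\<in>A. F z \<noteq> G z} \<subseteq> swap_affected n p q"
  proof clarify
    fix i s t assume z: "(i, s, t) \<in> A" and ne: "F (i, s, t) \<noteq> G (i, s, t)"
    have range: "Suc i < n" "s < n" "t < n"
      using z gt_pairs_subset[of xs] by (auto simp: A_def n_def)
    then have "{i, Suc i, s, t} \<inter> swap_nbhd p q \<noteq> {}"
      using des_change_swap_pos[OF p q, of i s t] ne by (auto simp: F_def G_def n_def)
    then show "(i, s, t) \<in> swap_affected n p q"
      using range by (simp add: mem_swap_affected)
  qed
  then have "card {z\<in>A. F z \<noteq> G z} \<le> 24 * n\<^sup>2"
    using card_mono[OF finite_swap_affected] card_swap_affected_le order.trans by blast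
  moreover have "\<bar>F (i, s, t) - G (i, s, t)\<bar> \<le> 16" for i s t
    using des_pi_star_diff_le[of ?xs' i "?\<tau> s" "?\<tau> t"] des_pi_star_diff_le[of xs i s t]
    by (simp add: F_def G_def abs_le_iff)
  ultimately have "\<bar>sum F A - sum G A\<bar> \<le> 16 * (24 * (real n)\<^sup>2)"
    using sum_diff_le_card_neq[of A F G 16] of_nat_mono[of _ "24 * n\<^sup>2", where ?'a = real]
    by (force simp: A_def)
  then show ?thesis
    unfolding total_des_change_swap_pos[OF p q] by (simp add: total_des_change_def A_def F_def G_def n_def)
qed

lemma two_Zconst: "2 * Zconst h ns = (\<Sum>a=1..h. real (ns a)) ^ 2 - (\<Sum>a=1..h. real (ns a) ^ 2)"
proof -
  have "{(a, b). a \<in> {1..h} \<and> b \<in> {1..h} \<and> b < a} = Sigma {1..h} (\<lambda>a. {1..<a})"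
    by auto
  then have "Zconst h ns = (\<Sum>a=1..h. \<Sum>b\<in>{1..<a}. real (ns a) * real (ns b))"
    by (simp add: Zconst_def sum.Sigma)
  then show ?thesis
    using square_sum_atLeastAtMost[of "\<lambda>a. real (ns a)" h] by simp
qed

lemma Zconst_nonneg: "Zconst h ns \<ge> 0"
  unfolding Zconst_def by (rule sum_nonneg) auto

lemma sum_letter_pairs_positions:
  assumes "set xs \<subseteq> {1..h}"
  shows "(\<Sum>(a, b) \<in> {(a, b). a \<in> {1..h} \<and> b \<in> {1..h} \<and> b < a}. \<Sum>s\<in>positions xs a. \<Sum>t\<in>positions xs b. D s t)
       = (\<Sum>(s, t) \<in> gt_pairs xs. D s t :: real)"
proof -
  let ?P = "{(a, b). a \<in> {1..h} \<and> b \<in> {1..h} \<and> b < a}"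
  let ?letters = "\<lambda>(s, t). (xs ! s, xs ! t)"
  have "finite ?P"
    by (rule finite_subset[of _ "{1..h} \<times> {1..h}"]) auto
  moreover have "?letters ` gt_pairs xs \<subseteq> ?P"
    using assms by (auto simp: gt_pairs_def dest!: nth_mem)
  ultimately have "(\<Sum>(s, t) \<in> gt_pairs xs. D s t)
      = (\<Sum>y\<in>?P. \<Sum>z\<in>{z \<in> gt_pairs xs. ?letters z = y}. case z of (s, t) \<Rightarrow> D s t)"
    using sum.group[OF finite_gt_pairs[of xs], of ?P ?letters "\<lambda>(s, t). D s t"] by simp
  also have "\<dots> = (\<Sum>(a, b) \<in> ?P. \<Sum>(s, t) \<in> positions xs a \<times> positions xs b. D s t)"
  proof (rule sum.cong[OF refl])
    fix y assume "y \<in> ?P"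
    then obtain a b where y: "y = (a, b)" and "b < a"
      by auto
    then have "{z \<in> gt_pairs xs. ?letters z = y} = positions xs a \<times> positions xs b"
      by (auto simp: gt_pairs_def positions_def)
    then show "(\<Sum>z\<in>{z \<in> gt_pairs xs. ?letters z = y}. case z of (s, t) \<Rightarrow> D s t)
        = (case y of (a, b) \<Rightarrow> \<Sum>(s, t) \<in> positions xs a \<times> positions xs b. D s t)"
      by (simp add: y)
  qed
  finally show ?thesis
    by (simp add: sum.cartesian_product)
qed

lemma cond_exp_diff_eq:
  assumes "set xs \<subseteq> {1..h}" and pos: "\<forall>a\<in>{1..h}. ns a > 0"
  shows "cond_exp_diff h ns xs = total_des_change xs / (real (length xs - 1) * Zconst h ns)"
proof -
  let ?P = "{(a, b). a \<in> {1..h} \<and> b \<in> {1..h} \<and> b < a}"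
  let ?\<Delta> = "\<lambda>i s t. real (des (pi_star xs i s t)) - real (des xs)"
  have "(\<Sum>(a, b)\<in>?P. (real (ns a) * real (ns b) / Zconst h ns) *
          (\<Sum>s\<in>positions xs a. \<Sum>t\<in>positions xs b. (1 / (real (ns a) * real (ns b))) * ?\<Delta> i s t))
      = (\<Sum>(s, t)\<in>gt_pairs xs. ?\<Delta> i s t) / Zconst h ns" for i
  proof -
    have "(\<Sum>(a, b)\<in>?P. (real (ns a) * real (ns b) / Zconst h ns) *
          (\<Sum>s\<in>positions xs a. \<Sum>t\<in>positions xs b. (1 / (real (ns a) * real (ns b))) * ?\<Delta> i s t))
        = (\<Sum>(a, b)\<in>?P. (\<Sum>s\<in>positions xs a. \<Sum>t\<in>positions xs b. ?\<Delta> i s t) / Zconst h ns)"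
      using pos by (intro sum.cong refl) (force simp: sum_divide_distrib[symmetric])
    also have "\<dots> = (\<Sum>(a, b)\<in>?P. \<Sum>s\<in>positions xs a. \<Sum>t\<in>positions xs b. ?\<Delta> i s t) / Zconst h ns"
      by (simp add: sum_divide_distrib case_prod_unfold)
    finally show ?thesis
      by (simp only: sum_letter_pairs_positions[OF assms(1)])
  qed
  then show ?thesis
    unfolding cond_exp_diff_def total_des_change_def
    by (simp add: sum.cartesian_product[symmetric] sum_divide_distrib atLeast0LessThan mult.commute)
qed

lemma multiset_perms_eq:
  "multiset_perms h ns = permutations_of_multiset (\<Sum>a\<in>{1..h}. replicate_mset (ns a) a)"
proof -
  define M where "M = (\<Sum>a\<in>{1..h}. replicate_mset (ns a) a)"
  have count_M: "count M b = (if b \<in> {1..h} then ns b else 0)" for b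
    by (simp add: M_def count_sum)
  have "xs \<in> multiset_perms h ns \<longleftrightarrow> mset xs = M" for xs
  proof
    assume "xs \<in> multiset_perms h ns"
    then show "mset xs = M"
      by (intro multiset_eqI) (auto simp: multiset_perms_def count_M count_mset_0_iff)
  next
    assume xs: "mset xs = M"
    have "set xs \<subseteq> {1..h}"
    proof
      fix b assume "b \<in> set xs"
      then have "count M b \<noteq> 0"
        by (simp flip: xs)
      then show "b \<in> {1..h}"
        by (simp add: count_M split: if_splits)
    qed
    then show "xs \<in> multiset_perms h ns"
      by (simp add: multiset_perms_def xs count_M)
  qed
  then show ?thesis
    by (auto simp: M_def permutations_of_multiset_def)
qed

lemma variance_cond_exp_diff_le:
  assumes pos: "\<forall>a\<in>{1..h}. ns a > 0"
  defines "N \<equiv> \<Sum>a=1..h. ns a"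
  shows "measure_pmf.variance (pmf_of_set (multiset_perms h ns)) (cond_exp_diff h ns)
           \<le> N * (384 * (real N)\<^sup>2 / (real (N - 1) * Zconst h ns))\<^sup>2"
proof -
  define M where "M = (\<Sum>a\<in>{1..h}. replicate_mset (ns a) a)"
  define L where "L = 384 * (real N)\<^sup>2 / (real (N - 1) * Zconst h ns)"
  have S: "multiset_perms h ns = permutations_of_multiset M"
    unfolding M_def by (rule multiset_perms_eq)
  have "size M = N"
    by (simp add: M_def N_def)
  have "\<bar>cond_exp_diff h ns (swap_pos xs p q) - cond_exp_diff h ns xs\<bar> \<le> L"
    if xs: "mset xs = M" and "p < size M" "q < size M" for xs p q
  proof -
    have len: "length xs = N" "p < length xs" "q < length xs"
      using that \<open>size M = N\<close> by (auto simp flip: xs)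
    have "set ys \<subseteq> {1..h}" if "mset ys = M" for ys
      using that S by (auto simp: multiset_perms_def permutations_of_multiset_def)
    then have "set xs \<subseteq> {1..h}" "set (swap_pos xs p q) \<subseteq> {1..h}"
      using xs len by simp_all
    then have "\<bar>cond_exp_diff h ns (swap_pos xs p q) - cond_exp_diff h ns xs\<bar>
        = \<bar>total_des_change (swap_pos xs p q) - total_des_change xs\<bar> / (real (N - 1) * Zconst h ns)"
      using len Zconst_nonneg[of h ns]
      by (simp add: cond_exp_diff_eq[OF _ pos] diff_divide_distrib[symmetric] abs_divide)
    also have "\<dots> \<le> L"
      unfolding L_def using total_des_change_swap_pos_le[of p xs q] len Zconst_nonneg[of h ns]
      by (simp add: divide_right_mono)
    finally show ?thesis .
  qed
  then have "sum_sq_dev (permutations_of_multiset M) (cond_exp_diff h ns)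
      \<le> real (card (permutations_of_multiset M)) * size M * L\<^sup>2"
    by (rule sum_sq_dev_permutations_of_multiset_le)
  then show ?thesis
    unfolding S using \<open>size M = N\<close>
    by (simp add: variance_pmf_of_set L_def card_gt_0_iff divide_le_eq mult.commute mult.left_commute)
qed

lemma variance_bound_arith:
  fixes n Z :: real
  assumes "n \<ge> 2" "Z \<ge> 0"
  shows "n * (384 * n\<^sup>2 / ((n - 1) * Z))\<^sup>2 \<le> 2359296 * n ^ 5 / (n ^ 2 * (2 * Z) ^ 2)"
proof (cases "Z = 0")
  case False
  have "4 * (n - 1)\<^sup>2 - n\<^sup>2 = (n - 2) * (3 * n - 2)"
    by (simp add: power2_eq_square algebra_simps)
  moreover have "(n - 2) * (3 * n - 2) \<ge> 0"
    using assms by simp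
  ultimately have "n\<^sup>2 \<le> 4 * (n - 1)\<^sup>2"
    by linarith
  then have "n\<^sup>2 / (n - 1)\<^sup>2 \<le> 4"
    using assms by (simp add: divide_le_eq)
  have "n * (384 * n\<^sup>2 / ((n - 1) * Z))\<^sup>2 = 147456 * n ^ 3 / Z\<^sup>2 * (n\<^sup>2 / (n - 1)\<^sup>2)"
    using assms False by (simp add: field_simps power2_eq_square power3_eq_cube)
  also have "\<dots> \<le> 147456 * n ^ 3 / Z\<^sup>2 * 4"
    using \<open>n\<^sup>2 / (n - 1)\<^sup>2 \<le> 4\<close> assms by (intro mult_left_mono) simp_all
  also have "\<dots> = 2359296 * n ^ 5 / (n ^ 2 * (2 * Z) ^ 2)"
    using assms False by (simp add: field_simps eval_nat_numeral)
  finally show ?thesis .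
qed simp

theorem lemma2p15:
  "\<exists>C::real. \<forall>(h::nat) (ns::nat \<Rightarrow> nat).
     h \<ge> 2 \<longrightarrow> (\<forall>a\<in>{1..h}. ns a > 0) \<longrightarrow> (\<Sum>a=1..h. ns a) \<ge> 4 \<longrightarrow>
     (let n = real (\<Sum>a=1..h. ns a) in
      measure_pmf.variance (pmf_of_set (multiset_perms h ns)) (cond_exp_diff h ns)
        \<le> C * n ^ 5 / (n ^ 2 * (n ^ 2 - (\<Sum>a=1..h. real (ns a) ^ 2)) ^ 2))"
proof (rule exI[of _ 2359296], intro allI impI)
  fix h :: nat and ns :: "nat \<Rightarrow> nat"
  assume pos: "\<forall>a\<in>{1..h}. ns a > 0" and "(\<Sum>a=1..h. ns a) \<ge> 4"
  define N where "N = (\<Sum>a=1..h. ns a)"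
  have "N \<ge> 4"
    using \<open>(\<Sum>a=1..h. ns a) \<ge> 4\<close> by (simp add: N_def)
  then have n: "real (N - 1) = real N - 1" "real N \<ge> 2"
    by (simp_all add: of_nat_diff)
  have "measure_pmf.variance (pmf_of_set (multiset_perms h ns)) (cond_exp_diff h ns)
      \<le> N * (384 * (real N)\<^sup>2 / (real (N - 1) * Zconst h ns))\<^sup>2"
    unfolding N_def by (rule variance_cond_exp_diff_le[OF pos])
  also have "\<dots> \<le> 2359296 * real N ^ 5 / (real N ^ 2 * (2 * Zconst h ns) ^ 2)"
    unfolding n(1) by (rule variance_bound_arith[OF n(2) Zconst_nonneg])
  also have "2 * Zconst h ns = real N ^ 2 - (\<Sum>a=1..h. real (ns a) ^ 2)"
    by (simp add: two_Zconst N_def)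
  finally show "let n = real (\<Sum>a=1..h. ns a) in
      measure_pmf.variance (pmf_of_set (multiset_perms h ns)) (cond_exp_diff h ns)
        \<le> 2359296 * n ^ 5 / (n ^ 2 * (n ^ 2 - (\<Sum>a=1..h. real (ns a) ^ 2)) ^ 2)"
    by (simp add: N_def)
qed

end
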